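(* Let $\zeta\in G\setminus\{0\}$ and let $f,g:G\times G\to\mathbb{C}$ be functions such that $L_aL_b=f(a,b)L_{a+b}+g(a,b)L_{a+b+\zeta}$ ($a,b\in G$) defines a CLSAS on $\mathcal{W}$. Suppose that there exist $\gamma\in\mathbb{C}$ and $\lambda\in G$ with $\gamma\neq\lambda$ such that $f(a,b)=\lambda+b$ whenever $\lambda+a+b\neq0$ and $f(a,b)=\frac{(\lambda+b)(\gamma-\lambda-b)}{\gamma-\lambda}$ whenever $\lambda+a+b=0$. Then $g(a,b)=0$ for all $a,b\in G$.
   Context: $G$ is a free (additive) subgroup of $\mathbb{C}$ of rank $\nu>1$. The high rank Witt algebra $\mathcal{W}$ has basis $\{L_a\mid a\in G\}$ and bracket $[L_a,L_b]=(b-a)L_{a+b}$. A left-symmetric algebra is a complex vector space with bilinear product satisfying $(xy)z-x(yz)=(yx)z-y(xz)$; a compatible left-symmetric algebraic structure (CLSAS) on a Lie algebra $\mathfrak g$ is such a product on $\mathfrak g$ with $xy-yx=[x,y]$. *)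

theory Defs
  imports Complex_Main
begin

definition free_subgroup_rank_gt1 :: "complex set \<Rightarrow> bool" where
  "free_subgroup_rank_gt1 G \<longleftrightarrow>
     (\<exists>B. (\<forall>S k. finite S \<and> S \<subseteq> B \<and> (\<Sum>s\<in>S. of_int (k s) * s) = 0
                 \<longrightarrow> (\<forall>s\<in>S. k s = (0::int)))
        \<and> G = {\<Sum>s\<in>S. of_int (k s) * s | S k. finite S \<and> S \<subseteq> B}
        \<and> (infinite B \<or> card B \<ge> 2))"

text \<open>Elements of the Witt algebra W: finitely supported coefficient functions
  on G, x = sum over a of (x a) L_a.\<close>
definition witt_elem :: "complex set \<Rightarrow> (complex \<Rightarrow> complex) \<Rightarrow> bool" where
  "witt_elem G x \<longleftrightarrow> (\<forall>c. c \<notin> G \<longrightarrow> x c = 0) \<and> finite {c. x c \<noteq> 0}"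

definition Lb :: "complex \<Rightarrow> complex \<Rightarrow> complex" where
  "Lb a = (\<lambda>c. if c = a then 1 else 0)"

definition witt_bracket :: "(complex \<Rightarrow> complex) \<Rightarrow> (complex \<Rightarrow> complex) \<Rightarrow> complex \<Rightarrow> complex" where
  "witt_bracket x y = (\<lambda>c. \<Sum>a\<in>{a. x a \<noteq> 0}. \<Sum>b\<in>{b. y b \<noteq> 0}.
       x a * y b * (if c = a + b then b - a else 0))"

definition fg_prod :: "(complex \<Rightarrow> complex \<Rightarrow> complex) \<Rightarrow> (complex \<Rightarrow> complex \<Rightarrow> complex) \<Rightarrow> complex
    \<Rightarrow> (complex \<Rightarrow> complex) \<Rightarrow> (complex \<Rightarrow> complex) \<Rightarrow> complex \<Rightarrow> complex" where
  "fg_prod f g \<zeta> x y = (\<lambda>c. \<Sum>a\<in>{a. x a \<noteq> 0}. \<Sum>b\<in>{b. y b \<noteq> 0}.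
       x a * y b * ((if c = a + b then f a b else 0) + (if c = a + b + \<zeta> then g a b else 0)))"

definition is_CLSAS :: "complex set \<Rightarrow> ((complex \<Rightarrow> complex) \<Rightarrow> (complex \<Rightarrow> complex) \<Rightarrow> complex \<Rightarrow> complex) \<Rightarrow> bool" where
  "is_CLSAS G m \<longleftrightarrow>
     (\<forall>x y. witt_elem G x \<longrightarrow> witt_elem G y \<longrightarrow> witt_elem G (m x y)) \<and>
     (\<forall>x y z. witt_elem G x \<longrightarrow> witt_elem G y \<longrightarrow> witt_elem G z \<longrightarrow>
        m (m x y) z - m x (m y z) = m (m y x) z - m y (m x z)) \<and>
     (\<forall>x y. witt_elem G x \<longrightarrow> witt_elem G y \<longrightarrow> m x y - m y x = witt_bracket x y)"

end

theory Submission
  imports Defs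
begin

text \<open>Write \<open>\<phi> = g(0,-)\<close>. The coefficient of \<open>L\<^bsub>b+c+\<zeta>\<^esub>\<close> in the left-symmetry identity
  for \<open>L\<^sub>0, L\<^sub>b, L\<^sub>c\<close> expresses \<open>\<zeta> g(b,c)\<close> through \<open>\<phi>\<close> and the known \<open>f\<close>; symmetry of
  \<open>g\<close> then gives a functional equation for \<open>\<phi>\<close> forcing it to be constant off the single point
  \<open>-\<lambda>-\<zeta>\<close> (when \<open>\<lambda> = -\<zeta>\<close> one first shows that \<open>\<phi>\<close> is affine, then that the slope vanishes).
  The coefficient of \<open>L\<^bsub>b+c+2\<zeta>\<^esub>\<close>, taken at a pair with \<open>b + c = -\<lambda>\<close> where \<open>f\<close> has its
  exceptional value, shows that this constant is \<open>0\<close>; then \<open>\<phi> = 0\<close> everywhere, hence \<open>g = 0\<close>.\<close>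

lemma free_subgroup_rank_gt1_subgroup:
  assumes "free_subgroup_rank_gt1 G"
  shows free_subgroup_zero: "0 \<in> G"
    and free_subgroup_add: "\<And>x y. x \<in> G \<Longrightarrow> y \<in> G \<Longrightarrow> x + y \<in> G"
    and free_subgroup_uminus: "\<And>x. x \<in> G \<Longrightarrow> - x \<in> G"
proof -
  obtain B where indep: "\<forall>S k. finite S \<and> S \<subseteq> B \<and> (\<Sum>s\<in>S. of_int (k s) * s) = 0
                 \<longrightarrow> (\<forall>s\<in>S. k s = (0::int))"
    and G_eq: "G = {\<Sum>s\<in>S. of_int (k s) * s | S k. finite S \<and> S \<subseteq> B}"
    using assms unfolding free_subgroup_rank_gt1_def by blast
  show "0 \<in> G" unfolding G_eq by (rule CollectI, rule exI[of _ "{}"]) auto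
  show "x + y \<in> G" if "x \<in> G" "y \<in> G" for x y
  proof -
    obtain S1 k1 where x: "x = (\<Sum>s\<in>S1. of_int (k1 s) * s)" "finite S1" "S1 \<subseteq> B"
      using \<open>x \<in> G\<close> G_eq by auto
    obtain S2 k2 where y: "y = (\<Sum>s\<in>S2. of_int (k2 s) * s)" "finite S2" "S2 \<subseteq> B"
      using \<open>y \<in> G\<close> G_eq by auto
    define k where "k s = (if s \<in> S1 then k1 s else 0) + (if s \<in> S2 then k2 s else 0)" for s
    have "(\<Sum>s\<in>S1 \<union> S2. of_int (k s) * s) =
      (\<Sum>s\<in>S1 \<union> S2. of_int (if s \<in> S1 then k1 s else 0) * s)
        + (\<Sum>s\<in>S1 \<union> S2. of_int (if s \<in> S2 then k2 s else 0) * s)"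
      unfolding k_def by (simp add: sum.distrib distrib_right)
    also have "(\<Sum>s\<in>S1 \<union> S2. of_int (if s \<in> S1 then k1 s else 0) * s) = x"
      unfolding x(1) by (rule sum.mono_neutral_cong_right) (use x y in auto)
    also have "(\<Sum>s\<in>S1 \<union> S2. of_int (if s \<in> S2 then k2 s else 0) * s) = y"
      unfolding y(1) by (rule sum.mono_neutral_cong_right) (use x y in auto)
    finally have "x + y = (\<Sum>s\<in>S1 \<union> S2. of_int (k s) * s)" ..
    then show ?thesis unfolding G_eq using x y by blast
  qed
  show "- x \<in> G" if "x \<in> G" for x
  proof -
    obtain S k where x: "x = (\<Sum>s\<in>S. of_int (k s) * s)" "finite S" "S \<subseteq> B"
      using \<open>x \<in> G\<close> G_eq by auto
    have "- x = (\<Sum>s\<in>S. of_int (- k s) * s)" unfolding x(1) by (simp add: sum_negf)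
    then show ?thesis unfolding G_eq using x by (intro CollectI exI[of _ S] exI[of _ "\<lambda>s. - k s"]) auto
  qed
qed

lemma free_subgroup_rank_gt1_infinite:
  assumes "free_subgroup_rank_gt1 G"
  shows "infinite G"
proof -
  obtain B where indep: "\<forall>S k. finite S \<and> S \<subseteq> B \<and> (\<Sum>s\<in>S. of_int (k s) * s) = 0
                 \<longrightarrow> (\<forall>s\<in>S. k s = (0::int))"
    and G_eq: "G = {\<Sum>s\<in>S. of_int (k s) * s | S k. finite S \<and> S \<subseteq> B}"
    and rank: "infinite B \<or> card B \<ge> 2"
    using assms unfolding free_subgroup_rank_gt1_def by blast
  obtain s where "s \<in> B" using rank by fastforce
  have "s \<noteq> 0"
  proof
    assume "s = 0"
    then show False using indep[rule_format, of "{s}" "\<lambda>_. 1"] \<open>s \<in> B\<close> by simp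
  qed
  have "range (\<lambda>n::int. of_int n * s) \<subseteq> G"
    unfolding G_eq using \<open>s \<in> B\<close> by (auto intro!: exI[of _ "{s}"])
  moreover have "inj (\<lambda>n::int. of_int n * s)"
    using \<open>s \<noteq> 0\<close> by (auto intro: injI)
  then have "infinite (range (\<lambda>n::int. of_int n * s))"
    using finite_imageD infinite_UNIV_int by blast
  ultimately show ?thesis using finite_subset by blast
qed

lemma supp_Lb: "{c. Lb a c \<noteq> 0} = {a}"
  unfolding Lb_def by auto

lemma witt_elem_Lb: "a \<in> G \<Longrightarrow> witt_elem G (Lb a)"
  unfolding witt_elem_def supp_Lb by (auto simp: Lb_def)

lemma witt_bracket_Lb_Lb: "witt_bracket (Lb a) (Lb b) t = (if t = a + b then b - a else 0)"
  unfolding witt_bracket_def supp_Lb by (simp add: Lb_def)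

lemma fg_prod_eq_sum_superset:
  assumes "finite S" "{a. x a \<noteq> 0} \<subseteq> S" and "finite T" "{b. y b \<noteq> 0} \<subseteq> T"
  shows "fg_prod f g z x y t = (\<Sum>a\<in>S. \<Sum>b\<in>T. x a * y b *
       ((if t = a + b then f a b else 0) + (if t = a + b + z then g a b else 0)))"
proof -
  have "(\<Sum>b\<in>{b. y b \<noteq> 0}. x a * y b * K b) = (\<Sum>b\<in>T. x a * y b * K b)" for a K
    by (rule sum.mono_neutral_left) (use assms in auto)
  then have "fg_prod f g z x y t = (\<Sum>a\<in>{a. x a \<noteq> 0}. \<Sum>b\<in>T. x a * y b *
       ((if t = a + b then f a b else 0) + (if t = a + b + z then g a b else 0)))"
    unfolding fg_prod_def by simp
  also have "\<dots> = (\<Sum>a\<in>S. \<Sum>b\<in>T. x a * y b *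
       ((if t = a + b then f a b else 0) + (if t = a + b + z then g a b else 0)))"
    by (rule sum.mono_neutral_left) (use assms in auto)
  finally show ?thesis .
qed

lemma fg_prod_Lb_Lb:
  "fg_prod f g z (Lb a) (Lb b) t = (if t = a + b then f a b else 0) + (if t = a + b + z then g a b else 0)"
  by (subst fg_prod_eq_sum_superset[of "{a}" _ "{b}"]) (auto simp: supp_Lb Lb_def)

lemma fg_prod_two_term_left:
  assumes "{c. u c \<noteq> 0} \<subseteq> {p, q}" "p \<noteq> q"
  shows "fg_prod f g z u (Lb c) t =
    u p * fg_prod f g z (Lb p) (Lb c) t + u q * fg_prod f g z (Lb q) (Lb c) t"
  unfolding fg_prod_Lb_Lb
  by (subst fg_prod_eq_sum_superset[of "{p, q}" _ "{c}"]) (use assms in \<open>auto simp: supp_Lb Lb_def\<close>)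

lemma fg_prod_two_term_right:
  assumes "{c. u c \<noteq> 0} \<subseteq> {p, q}" "p \<noteq> q"
  shows "fg_prod f g z (Lb a) u t =
    u p * fg_prod f g z (Lb a) (Lb p) t + u q * fg_prod f g z (Lb a) (Lb q) t"
  unfolding fg_prod_Lb_Lb
  by (subst fg_prod_eq_sum_superset[of "{a}" _ "{p, q}"]) (use assms in \<open>auto simp: supp_Lb Lb_def\<close>)

lemma supp_fg_prod_Lb_Lb: "{c. fg_prod f g z (Lb a) (Lb b) c \<noteq> 0} \<subseteq> {a + b, a + b + z}"
  by (auto simp: fg_prod_Lb_Lb split: if_splits)

lemma fg_prod_Lb_Lb_left:
  "z \<noteq> 0 \<Longrightarrow> fg_prod f g z (fg_prod f g z (Lb a) (Lb b)) (Lb c) t =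
     f a b * fg_prod f g z (Lb (a + b)) (Lb c) t + g a b * fg_prod f g z (Lb (a + b + z)) (Lb c) t"
  by (subst fg_prod_two_term_left[OF supp_fg_prod_Lb_Lb]) (auto simp: fg_prod_Lb_Lb)

lemma fg_prod_Lb_Lb_right:
  "z \<noteq> 0 \<Longrightarrow> fg_prod f g z (Lb a) (fg_prod f g z (Lb b) (Lb c)) t =
     f b c * fg_prod f g z (Lb a) (Lb (b + c)) t + g b c * fg_prod f g z (Lb a) (Lb (b + c + z)) t"
  by (subst fg_prod_two_term_right[OF supp_fg_prod_Lb_Lb]) (auto simp: fg_prod_Lb_Lb)

lemma CLSAS_fg_prod_commutator:
  assumes "is_CLSAS G (fg_prod f g z)" "z \<noteq> 0" "a \<in> G" "b \<in> G"
  shows "f a b - f b a = b - a" and "g a b = g b a"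
proof -
  have "fg_prod f g z (Lb a) (Lb b) - fg_prod f g z (Lb b) (Lb a) = witt_bracket (Lb a) (Lb b)"
    using assms(1) witt_elem_Lb[OF assms(3)] witt_elem_Lb[OF assms(4)] unfolding is_CLSAS_def by blast
  from fun_cong[OF this] have comm: "fg_prod f g z (Lb a) (Lb b) t - fg_prod f g z (Lb b) (Lb a) t = witt_bracket (Lb a) (Lb b) t"
    for t by simp
  show "f a b - f b a = b - a"
    using comm[of "a + b"] assms(2) by (simp add: fg_prod_Lb_Lb witt_bracket_Lb_Lb add.commute)
  show "g a b = g b a"
    using comm[of "a + b + z"] assms(2) by (simp add: fg_prod_Lb_Lb witt_bracket_Lb_Lb algebra_simps)
qed

text \<open>Left-symmetry of \<open>L\<^sub>a, L\<^sub>b, L\<^sub>c\<close>, compared at \<open>L\<^bsub>a+b+c+\<zeta>\<^esub>\<close> and at \<open>L\<^bsub>a+b+c+2\<zeta>\<^esub>\<close>.\<close>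

lemma CLSAS_fg_prod_left_symmetry:
  assumes "is_CLSAS G (fg_prod f g z)" "z \<noteq> 0" "a \<in> G" "b \<in> G" "c \<in> G"
  shows "f a b * g (a+b) c + g a b * f (a+b+z) c - (f b c * g a (b+c) + g b c * f a (b+c+z))
       = f b a * g (a+b) c + g b a * f (a+b+z) c - (f a c * g b (a+c) + g a c * f b (a+c+z))"
    and "g a b * g (a+b+z) c - g b c * g a (b+c+z) = g b a * g (a+b+z) c - g a c * g b (a+c+z)"
proof -
  let ?P = "fg_prod f g z"
  have "?P (?P (Lb a) (Lb b)) (Lb c) - ?P (Lb a) (?P (Lb b) (Lb c)) =
          ?P (?P (Lb b) (Lb a)) (Lb c) - ?P (Lb b) (?P (Lb a) (Lb c))"
    using assms(1) witt_elem_Lb[OF assms(3)] witt_elem_Lb[OF assms(4)] witt_elem_Lb[OF assms(5)]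
    unfolding is_CLSAS_def by blast
  from fun_cong[OF this] have ls: "?P (?P (Lb a) (Lb b)) (Lb c) t - ?P (Lb a) (?P (Lb b) (Lb c)) t =
          ?P (?P (Lb b) (Lb a)) (Lb c) t - ?P (Lb b) (?P (Lb a) (Lb c)) t" for t
    by simp
  show "f a b * g (a+b) c + g a b * f (a+b+z) c - (f b c * g a (b+c) + g b c * f a (b+c+z))
       = f b a * g (a+b) c + g b a * f (a+b+z) c - (f a c * g b (a+c) + g a c * f b (a+c+z))"
    using ls[of "a + b + c + z"] assms(2)
    by (simp add: fg_prod_Lb_Lb_left fg_prod_Lb_Lb_right fg_prod_Lb_Lb algebra_simps)
  show "g a b * g (a+b+z) c - g b c * g a (b+c+z) = g b a * g (a+b+z) c - g a c * g b (a+c+z)"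
    using ls[of "a + b + c + z + z"] assms(2)
    by (simp add: fg_prod_Lb_Lb_left fg_prod_Lb_Lb_right fg_prod_Lb_Lb algebra_simps)
qed

locale shifted_witt_CLSAS =
  fixes G :: "complex set" and \<zeta> \<gamma> lam :: complex
    and f g :: "complex \<Rightarrow> complex \<Rightarrow> complex"
  assumes zero_in: "0 \<in> G"
    and add_in: "\<And>x y. x \<in> G \<Longrightarrow> y \<in> G \<Longrightarrow> x + y \<in> G"
    and uminus_in: "\<And>x. x \<in> G \<Longrightarrow> - x \<in> G"
    and infinite_G: "infinite G"
    and zeta_in: "\<zeta> \<in> G" and zeta_nonzero: "\<zeta> \<noteq> 0"
    and lam_in: "lam \<in> G" and gamma_ne_lam: "\<gamma> \<noteq> lam"
    and f_generic: "\<And>a b. a \<in> G \<Longrightarrow> b \<in> G \<Longrightarrow> lam + a + b \<noteq> 0 \<Longrightarrow> f a b = lam + b"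
    and f_special: "\<And>a b. a \<in> G \<Longrightarrow> b \<in> G \<Longrightarrow> lam + a + b = 0 \<Longrightarrow>
           f a b = (lam + b) * (\<gamma> - lam - b) / (\<gamma> - lam)"
    and f_commutator: "\<And>a b. a \<in> G \<Longrightarrow> b \<in> G \<Longrightarrow> f a b - f b a = b - a"
    and g_sym: "\<And>a b. a \<in> G \<Longrightarrow> b \<in> G \<Longrightarrow> g a b = g b a"
    and left_symmetry_shift: "\<And>a b c. a \<in> G \<Longrightarrow> b \<in> G \<Longrightarrow> c \<in> G \<Longrightarrow>
      f a b * g (a+b) c + g a b * f (a+b+\<zeta>) c - (f b c * g a (b+c) + g b c * f a (b+c+\<zeta>))
      = f b a * g (a+b) c + g b a * f (a+b+\<zeta>) c - (f a c * g b (a+c) + g a c * f b (a+c+\<zeta>))"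
    and left_symmetry_double_shift: "\<And>a b c. a \<in> G \<Longrightarrow> b \<in> G \<Longrightarrow> c \<in> G \<Longrightarrow>
      g a b * g (a+b+\<zeta>) c - g b c * g a (b+c+\<zeta>) = g b a * g (a+b+\<zeta>) c - g a c * g b (a+c+\<zeta>)"
begin

lemma diff_in: "x \<in> G \<Longrightarrow> y \<in> G \<Longrightarrow> x - y \<in> G"
  using add_in[of x "- y"] uminus_in by simp

lemma obtain_avoiding:
  assumes "finite F"
  obtains c where "c \<in> G" "c \<notin> F"
  using Diff_infinite_finite[OF assms infinite_G] by (metis Diff_iff ex_in_conv infinite_imp_nonempty)

lemma f_zero_left: "y \<in> G \<Longrightarrow> f 0 y = lam + y"
  by (cases "lam + y = 0") (use f_generic[OF zero_in] f_special[OF zero_in] in auto)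

lemma f_zero_right: "b \<in> G \<Longrightarrow> f b 0 = lam"
  using f_commutator[OF zero_in, of b] f_zero_left[of b] by simp

lemma f_shift:
  assumes "b \<in> G" "c \<in> G" "b + c \<noteq> - lam - \<zeta>"
  shows "f b (c + \<zeta>) = lam + c + \<zeta>"
proof -
  have "lam + b + (c + \<zeta>) \<noteq> 0"
    using assms(3) by (auto simp: algebra_simps eq_neg_iff_add_eq_0)
  then show ?thesis using f_generic[OF assms(1) add_in[OF assms(2) zeta_in]] by simp
qed

lemma zeta_mult_g:
  assumes "b \<in> G" "c \<in> G"
  shows "\<zeta> * g b c = g 0 c * f b (c + \<zeta>) - f b c * g 0 (b + c)"
proof -
  have "(lam + b) * g b c + g 0 b * f (b + \<zeta>) c - (f b c * g 0 (b + c) + g b c * (lam + (b + c + \<zeta>)))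
      = lam * g b c + g 0 b * f (b + \<zeta>) c - ((lam + c) * g b c + g 0 c * f b (c + \<zeta>))"
    using left_symmetry_shift[OF zero_in assms] g_sym[OF assms(1) zero_in]
      f_zero_left[OF assms(1)] f_zero_left[OF assms(2)] f_zero_right[OF assms(1)]
      f_zero_left[OF add_in[OF add_in[OF assms] zeta_in]]
    by (simp add: add.assoc)
  then show ?thesis by algebra
qed

lemma g_zero_relation:
  assumes "b \<in> G" "c \<in> G"
  shows "g 0 c * f b (c + \<zeta>) - g 0 b * f c (b + \<zeta>) = (c - b) * g 0 (b + c)"
proof -
  have "\<zeta> * g b c = g 0 b * f c (b + \<zeta>) - f c b * g 0 (b + c)"
    using zeta_mult_g[OF assms(2,1)] g_sym[OF assms] by (simp add: add.commute)
  then show ?thesis using zeta_mult_g[OF assms] f_commutator[OF assms] by algebra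
qed

lemma g_zero_const_nondegenerate:
  assumes "lam + \<zeta> \<noteq> 0" "x \<in> G" "x \<noteq> - lam - \<zeta>"
  shows "g 0 x = g 0 0"
proof -
  have "g 0 x * (lam + x + \<zeta>) - g 0 0 * (lam + \<zeta>) = x * g 0 x"
    using g_zero_relation[OF zero_in assms(2)] f_zero_left[OF add_in[OF assms(2) zeta_in]]
      f_shift[OF assms(2) zero_in] assms(3) by (simp add: add.assoc)
  then have "(lam + \<zeta>) * (g 0 x - g 0 0) = 0" by algebra
  then show ?thesis using assms(1) by simp
qed

context
  assumes degenerate: "lam = - \<zeta>"
begin

lemma g_zero_degenerate_relation:
  assumes "b \<in> G" "c \<in> G" "b + c \<noteq> 0"
  shows "c * g 0 c - b * g 0 b = (c - b) * g 0 (b + c)"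
proof -
  have "f b (c + \<zeta>) = c" "f c (b + \<zeta>) = b"
    using f_shift[OF assms(1,2)] f_shift[OF assms(2,1)] assms(3) degenerate
    by (simp_all add: add.commute)
  then show ?thesis using g_zero_relation[OF assms(1,2)] by (simp add: mult.commute)
qed

lemma g_zero_degenerate_affine:
  assumes "x \<in> G" "x \<noteq> 0"
  shows "2 * \<zeta> * g 0 x = (\<zeta> + x) * g 0 \<zeta> + (\<zeta> - x) * g 0 (- \<zeta>)"
proof (cases "x = - \<zeta>")
  case False
  have "\<zeta> * g 0 \<zeta> - x * g 0 x = (\<zeta> - x) * g 0 (x + \<zeta>)"
    using g_zero_degenerate_relation[OF assms(1) zeta_in] False by (simp add: eq_neg_iff_add_eq_0)
  moreover have "(- \<zeta>) * g 0 (- \<zeta>) - (x + \<zeta>) * g 0 (x + \<zeta>) = (- \<zeta> - (x + \<zeta>)) * g 0 x"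
    using g_zero_degenerate_relation[OF add_in[OF assms(1) zeta_in] uminus_in[OF zeta_in]] assms(2)
    by simp
  ultimately have "\<zeta> * (2 * \<zeta> * g 0 x - ((\<zeta> + x) * g 0 \<zeta> + (\<zeta> - x) * g 0 (- \<zeta>))) = 0"
    by algebra
  then show ?thesis using zeta_nonzero by simp
qed simp

lemma g_zero_degenerate_opposite:
  assumes "b \<in> G" "b \<noteq> 0"
  shows "g 0 (- b) * (\<gamma> + b) + g 0 b * (\<gamma> - b) = 2 * (\<gamma> + \<zeta>) * g 0 0"
proof -
  have "\<gamma> + \<zeta> \<noteq> 0" using gamma_ne_lam degenerate by (simp add: eq_neg_iff_add_eq_0)
  have "f b (- b + \<zeta>) = (lam + (- b + \<zeta>)) * (\<gamma> - lam - (- b + \<zeta>)) / (\<gamma> - lam)"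
    by (rule f_special) (use assms degenerate add_in uminus_in zeta_in diff_in[OF zeta_in assms(1)] in auto)
  then have fb: "(\<gamma> + \<zeta>) * f b (- b + \<zeta>) = - b * (\<gamma> + b)"
    using degenerate \<open>\<gamma> + \<zeta> \<noteq> 0\<close> by (simp add: field_simps)
  have "f (- b) (b + \<zeta>) = (lam + (b + \<zeta>)) * (\<gamma> - lam - (b + \<zeta>)) / (\<gamma> - lam)"
    by (rule f_special) (use assms degenerate add_in uminus_in zeta_in diff_in[OF zeta_in assms(1)] in auto)
  then have fnb: "(\<gamma> + \<zeta>) * f (- b) (b + \<zeta>) = b * (\<gamma> - b)"
    using degenerate \<open>\<gamma> + \<zeta> \<noteq> 0\<close> by (simp add: field_simps)
  have "g 0 (- b) * f b (- b + \<zeta>) - g 0 b * f (- b) (b + \<zeta>) = (- b - b) * g 0 0"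
    using g_zero_relation[OF assms(1) uminus_in[OF assms(1)]] by simp
  with fb fnb have "b * (g 0 (- b) * (\<gamma> + b) + g 0 b * (\<gamma> - b) - 2 * (\<gamma> + \<zeta>) * g 0 0) = 0"
    by algebra
  then show ?thesis using assms(2) by simp
qed

lemma g_zero_degenerate_quadratic:
  assumes "b \<in> G" "b \<noteq> 0"
  shows "b\<^sup>2 * (g 0 (- \<zeta>) - g 0 \<zeta>) = 2 * \<zeta> * (\<gamma> + \<zeta>) * g 0 0 - \<gamma> * \<zeta> * (g 0 \<zeta> + g 0 (- \<zeta>))"
  using g_zero_degenerate_affine[OF assms] g_zero_degenerate_opposite[OF assms]
    g_zero_degenerate_affine[OF uminus_in[OF assms(1)]] assms(2)
  by (simp add: power2_eq_square) algebra

text \<open>By the quadratic relation, \<open>b\<^sup>2 (g(0,-\<zeta>) - g(0,\<zeta>))\<close> does not depend on \<open>b\<close>; comparing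
  \<open>b = \<zeta>\<close> with \<open>b = 2\<zeta>\<close> shows that the affine function \<open>g(0,-)\<close> has slope zero.\<close>

lemma g_zero_const_degenerate:
  assumes "x \<in> G" "x \<noteq> 0"
  shows "g 0 x = g 0 \<zeta>"
proof -
  have "2 * \<zeta> \<in> G" using add_in[OF zeta_in zeta_in] by (simp only: mult_2)
  moreover have "2 * \<zeta> \<noteq> 0" using zeta_nonzero by simp
  ultimately have "(2 * \<zeta>)\<^sup>2 * (g 0 (- \<zeta>) - g 0 \<zeta>) = \<zeta>\<^sup>2 * (g 0 (- \<zeta>) - g 0 \<zeta>)"
    by (metis g_zero_degenerate_quadratic zeta_in zeta_nonzero)
  then have "3 * \<zeta>\<^sup>2 * (g 0 (- \<zeta>) - g 0 \<zeta>) = 0" by algebra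
  then have "g 0 (- \<zeta>) = g 0 \<zeta>" using zeta_nonzero by simp
  then have "2 * \<zeta> * g 0 x = 2 * \<zeta> * g 0 \<zeta>"
    using g_zero_degenerate_affine[OF assms] by (simp add: algebra_simps)
  then show ?thesis using zeta_nonzero by simp
qed

end

lemma g_zero_const:
  obtains p where "\<And>x. x \<in> G \<Longrightarrow> x \<noteq> - lam - \<zeta> \<Longrightarrow> g 0 x = p"
proof (cases "lam + \<zeta> = 0")
  case True
  then have "lam = - \<zeta>" by (simp add: eq_neg_iff_add_eq_0)
  then show ?thesis using that g_zero_const_degenerate by auto
next
  case False
  then show ?thesis using that g_zero_const_nondegenerate by blast
qed

lemma g_antidiagonal_shift:
  assumes const: "\<And>x. x \<in> G \<Longrightarrow> x \<noteq> - lam - \<zeta> \<Longrightarrow> g 0 x = p"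
    and b: "b \<in> G" and c: "c \<in> G" and bc: "b + c = - lam" and "c \<noteq> - lam - 2 * \<zeta>"
  shows "g b (c + \<zeta>) = p"
proof -
  have c\<zeta>: "c + \<zeta> \<in> G" using add_in[OF c zeta_in] .
  have two_zeta: "2 * \<zeta> \<noteq> 0" using zeta_nonzero by simp
  have "g 0 (c + \<zeta>) = p"
    by (rule const[OF c\<zeta>]) (use assms(5) in \<open>auto simp: algebra_simps\<close>)
  moreover have "g 0 (b + c + \<zeta>) = p"
    by (rule const[OF add_in[OF add_in[OF b c] zeta_in]]) (use bc two_zeta in \<open>auto simp: algebra_simps\<close>)
  moreover have "f b (c + \<zeta>) = lam + c + \<zeta>"
    by (rule f_shift[OF b c]) (use bc zeta_nonzero in auto)
  moreover have "f b (c + \<zeta> + \<zeta>) = lam + (c + \<zeta>) + \<zeta>"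
    by (rule f_shift[OF b c\<zeta>]) (use bc two_zeta in \<open>auto simp: algebra_simps\<close>)
  ultimately have "\<zeta> * g b (c + \<zeta>) = \<zeta> * p"
    using zeta_mult_g[OF b c\<zeta>] by (simp add: add.assoc algebra_simps)
  then show ?thesis using zeta_nonzero by simp
qed

lemma g_zero_const_is_zero:
  assumes const: "\<And>x. x \<in> G \<Longrightarrow> x \<noteq> - lam - \<zeta> \<Longrightarrow> g 0 x = p"
  shows "p = 0"
proof -
  obtain c where c: "c \<in> G" "c \<notin> {0, - lam, - lam - \<zeta>, - lam - 2 * \<zeta>}"
    using obtain_avoiding[of "{0, - lam, - lam - \<zeta>, - lam - 2 * \<zeta>}"] by blast
  define b where "b = - lam - c"
  have b: "b \<in> G" unfolding b_def using diff_in[OF uminus_in[OF lam_in] c(1)] .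
  have bc: "b + c = - lam" unfolding b_def by simp
  have g0_c: "g 0 c = p" by (rule const[OF c(1)]) (use c(2) in auto)
  have g0_bc: "g 0 (b + c) = p"
    unfolding bc by (rule const[OF uminus_in[OF lam_in]]) (use zeta_nonzero in simp)
  have g0_bc_shift: "g 0 (b + c + \<zeta>) = p"
    unfolding bc by (rule const[OF add_in[OF uminus_in[OF lam_in] zeta_in]]) (use zeta_nonzero in simp)
  have f_shift1: "f b (c + \<zeta>) = lam + c + \<zeta>"
    by (rule f_shift[OF b c(1)]) (use bc zeta_nonzero in auto)
  have f_bc: "(\<gamma> - lam) * f b c = (lam + c) * (\<gamma> - lam - c)"
    using f_special[OF b c(1)] bc gamma_ne_lam by (simp add: add.assoc)
  have "g b c * p = p * p"
    using left_symmetry_double_shift[OF zero_in b c(1)] g_sym[OF b zero_in] g0_c g0_bc_shift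
      g_antidiagonal_shift[OF const b c(1) bc] c(2)
    by (simp add: add.assoc)
  moreover have "\<zeta> * g b c = p * (lam + c + \<zeta>) - f b c * p"
    using zeta_mult_g[OF b c(1)] g0_c g0_bc f_shift1 by simp
  ultimately have "p\<^sup>2 * ((lam + c) * c) = 0"
    using f_bc by algebra
  moreover have "lam + c \<noteq> 0" "c \<noteq> 0"
    using c(2) by (auto simp: eq_neg_iff_add_eq_0 add.commute)
  ultimately show "p = 0" by simp
qed

lemma g_zero_eq_zero:
  assumes "x \<in> G"
  shows "g 0 x = 0"
proof -
  obtain p where "\<And>x. x \<in> G \<Longrightarrow> x \<noteq> - lam - \<zeta> \<Longrightarrow> g 0 x = p"
    using g_zero_const by blast
  with g_zero_const_is_zero have generic: "\<And>x. x \<in> G \<Longrightarrow> x \<noteq> - lam - \<zeta> \<Longrightarrow> g 0 x = 0"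
    by blast
  show ?thesis
  proof (cases "x = - lam - \<zeta>")
    case True
    obtain c where c: "c \<in> G" "c \<notin> {0, x, x / 2}"
      using obtain_avoiding[of "{0, x, x / 2}"] by blast
    have "x - c \<in> G" using diff_in[OF assms c(1)] .
    moreover have "x - c \<noteq> - lam - \<zeta>" "c \<noteq> - lam - \<zeta>" using c(2) True by auto
    ultimately have "(c - (x - c)) * g 0 x = 0"
      using g_zero_relation[of "x - c" c] generic c(1) by simp
    moreover have "c - (x - c) \<noteq> 0" using c(2) by (auto simp: field_simps)
    ultimately show ?thesis by simp
  qed (use generic assms in blast)
qed

lemma g_eq_zero:
  assumes "a \<in> G" "b \<in> G"
  shows "g a b = 0"
  using zeta_mult_g[OF assms] g_zero_eq_zero add_in[OF assms] assms(2) zeta_nonzero by simp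

end

theorem proposition4p3:
  fixes G :: "complex set" and \<zeta> \<gamma> lam :: complex
    and f g :: "complex \<Rightarrow> complex \<Rightarrow> complex"
  assumes "free_subgroup_rank_gt1 G"
    and "\<zeta> \<in> G" and "\<zeta> \<noteq> 0"
    and "is_CLSAS G (fg_prod f g \<zeta>)"
    and "lam \<in> G" and "\<gamma> \<noteq> lam"
    and "\<And>a b. a \<in> G \<Longrightarrow> b \<in> G \<Longrightarrow> lam + a + b \<noteq> 0 \<Longrightarrow> f a b = lam + b"
    and "\<And>a b. a \<in> G \<Longrightarrow> b \<in> G \<Longrightarrow> lam + a + b = 0 \<Longrightarrow>
           f a b = (lam + b) * (\<gamma> - lam - b) / (\<gamma> - lam)"
  shows "\<forall>a\<in>G. \<forall>b\<in>G. g a b = 0"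
proof -
  note group = free_subgroup_rank_gt1_subgroup[OF assms(1)] free_subgroup_rank_gt1_infinite[OF assms(1)]
  note commutator = CLSAS_fg_prod_commutator[OF assms(4,3)]
  note left_symmetry = CLSAS_fg_prod_left_symmetry[OF assms(4,3)]
  interpret shifted_witt_CLSAS G \<zeta> \<gamma> lam f g
    by unfold_locales (fact group commutator left_symmetry assms(2,3,5-8))+
  show ?thesis using g_eq_zero by blast
qed

end
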